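(* In the setting of the context with $\lambda_n^2=\tilde{\beta}_n$ for all $n$, the optimal reverse variance satisfies $$\tilde{\beta}_n\le\sigma_n^{*2}\le\frac{\beta_n}{\alpha_n}.$$ If moreover $q(\mathbf{x}_0)$ is supported in $[a,b]^d$, then $$\sigma_n^{*2}\le\tilde{\beta}_n+\frac{\overline{\alpha}_{n-1}\beta_n^2}{\overline{\beta}_n^2}\Big(\frac{b-a}{2}\Big)^2.$$
   Context: Let $d,N\ge1$, $\beta_1,\dots,\beta_N\in(0,1)$, $\alpha_n=1-\beta_n$, $\overline{\alpha}_n=\prod_{i\le n}\alpha_i$, $\overline{\beta}_n=1-\overline{\alpha}_n$, $\overline{\alpha}_0:=1$, $\overline{\beta}_0:=0$, $\tilde{\beta}_n:=\frac{\overline{\beta}_{n-1}}{\overline{\beta}_n}\beta_n$. Let $q(\mathbf{x}_0)$ be a probability density on $\mathbb{R}^d$ with finite second moments. With $\lambda_n^2=\tilde{\beta}_n$, define $\tilde{\boldsymbol{\mu}}_n(\mathbf{x}_n,\mathbf{x}_0)=\sqrt{\overline{\alpha}_{n-1}}\mathbf{x}_0+\sqrt{\overline{\beta}_{n-1}-\lambda_n^2}\frac{\mathbf{x}_n-\sqrt{\overline{\alpha}_n}\mathbf{x}_0}{\sqrt{\overline{\beta}_n}}$ and the forward process $q(\mathbf{x}_{0:N})=q(\mathbf{x}_0)q(\mathbf{x}_N|\mathbf{x}_0)\prod_{n=2}^Nq(\mathbf{x}_{n-1}|\mathbf{x}_n,\mathbf{x}_0)$ with $q(\mathbf{x}_N|\mathbf{x}_0)=\mathcal{N}(\sqrt{\overline{\alpha}_N}\mathbf{x}_0,\overline{\beta}_N\mathbf{I})$,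 $q(\mathbf{x}_{n-1}|\mathbf{x}_n,\mathbf{x}_0)=\mathcal{N}(\tilde{\boldsymbol{\mu}}_n(\mathbf{x}_n,\mathbf{x}_0),\lambda_n^2\mathbf{I})$. The optimal reverse variance $\sigma_n^{*2}$ is the variance in a minimizer of $D_{\mathrm{KL}}(q(\mathbf{x}_{0:N})\|p(\mathbf{x}_{0:N}))$ over reverse models $p(\mathbf{x}_{0:N})=\mathcal{N}(\mathbf{x}_N|\mathbf{0},\mathbf{I})\prod_{n=1}^N\mathcal{N}(\mathbf{x}_{n-1}|\boldsymbol{\mu}_n(\mathbf{x}_n),\sigma_n^2\mathbf{I})$; it equals $\mathbb{E}_{q_n(\mathbf{x}_n)}\mathrm{tr}(\mathrm{Cov}_{q(\mathbf{x}_{n-1}|\mathbf{x}_n)}[\mathbf{x}_{n-1}])/d$. *)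

theory Defs
  imports "HOL-Analysis.Analysis"
begin

text \<open>Noise schedule. beta is indexed by n = 1..N.\<close>

definition alpha :: "(nat \<Rightarrow> real) \<Rightarrow> nat \<Rightarrow> real" where
  "alpha \<beta> n = 1 - \<beta> n"

definition abar :: "(nat \<Rightarrow> real) \<Rightarrow> nat \<Rightarrow> real" where
  "abar \<beta> n = (\<Prod>i\<in>{1..n}. alpha \<beta> i)"

definition bbar :: "(nat \<Rightarrow> real) \<Rightarrow> nat \<Rightarrow> real" where
  "bbar \<beta> n = 1 - abar \<beta> n"

definition btil :: "(nat \<Rightarrow> real) \<Rightarrow> nat \<Rightarrow> real" where
  "btil \<beta> n = bbar \<beta> (n - 1) / bbar \<beta> n * \<beta> n"

definition gauss_dens :: "real^'d \<Rightarrow> real \<Rightarrow> real^'d \<Rightarrow> real" where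
  "gauss_dens m s x =
     (2 * pi * s) powr (- real CARD('d) / 2) * exp (- (norm (x - m))\<^sup>2 / (2 * s))"

text \<open>Posterior mean tilde mu_n(x_n, x_0) with lambda_n^2 = btil n.\<close>

definition mu_til :: "(nat \<Rightarrow> real) \<Rightarrow> nat \<Rightarrow> real^'d \<Rightarrow> real^'d \<Rightarrow> real^'d" where
  "mu_til \<beta> n x x0 =
     sqrt (abar \<beta> (n - 1)) *\<^sub>R x0
     + (sqrt (bbar \<beta> (n - 1) - btil \<beta> n) / sqrt (bbar \<beta> n)) *\<^sub>R (x - sqrt (abar \<beta> n) *\<^sub>R x0)"

text \<open>Marginal conditional density q(x_n | x_0) of the forward process
  q(x_{1:N}|x_0) = q(x_N|x_0) prod_{n=2}^N q(x_{n-1}|x_n,x_0),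
  computed by integrating out x_N, ..., x_{n+1}; the argument k counts steps from N,
  i.e. fwd_cond_aux beta N k is the density of x_{N-k} given x_0.\<close>

fun fwd_cond_aux :: "(nat \<Rightarrow> real) \<Rightarrow> nat \<Rightarrow> nat \<Rightarrow> real^'d \<Rightarrow> real^'d \<Rightarrow> real" where
  "fwd_cond_aux \<beta> N 0 x0 x = gauss_dens (sqrt (abar \<beta> N) *\<^sub>R x0) (bbar \<beta> N) x"
| "fwd_cond_aux \<beta> N (Suc k) x0 y =
     (\<integral>x. fwd_cond_aux \<beta> N k x0 x * gauss_dens (mu_til \<beta> (N - k) x x0) (btil \<beta> (N - k)) y \<partial>lborel)"

definition fwd_cond :: "(nat \<Rightarrow> real) \<Rightarrow> nat \<Rightarrow> nat \<Rightarrow> real^'d \<Rightarrow> real^'d \<Rightarrow> real" where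
  "fwd_cond \<beta> N n x0 x = fwd_cond_aux \<beta> N (N - n) x0 x"

definition marg :: "(real^'d \<Rightarrow> real) \<Rightarrow> (nat \<Rightarrow> real) \<Rightarrow> nat \<Rightarrow> nat \<Rightarrow> real^'d \<Rightarrow> real" where
  "marg q \<beta> N n x = (\<integral>x0. q x0 * fwd_cond \<beta> N n x0 x \<partial>lborel)"

text \<open>Joint density q(x_{n-1} = y, x_n = x). For n = 1, x_{n-1} = x_0.\<close>

definition joint :: "(real^'d \<Rightarrow> real) \<Rightarrow> (nat \<Rightarrow> real) \<Rightarrow> nat \<Rightarrow> nat \<Rightarrow> real^'d \<Rightarrow> real^'d \<Rightarrow> real" where
  "joint q \<beta> N n y x =
     (if n = 1 then q y * fwd_cond \<beta> N 1 y x
      else (\<integral>x0. q x0 * fwd_cond \<beta> N n x0 x * gauss_dens (mu_til \<beta> n x x0) (btil \<beta> n) y \<partial>lborel))"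

definition rev_cond :: "(real^'d \<Rightarrow> real) \<Rightarrow> (nat \<Rightarrow> real) \<Rightarrow> nat \<Rightarrow> nat \<Rightarrow> real^'d \<Rightarrow> real^'d \<Rightarrow> real" where
  "rev_cond q \<beta> N n x y = joint q \<beta> N n y x / marg q \<beta> N n x"

definition rev_mean :: "(real^'d \<Rightarrow> real) \<Rightarrow> (nat \<Rightarrow> real) \<Rightarrow> nat \<Rightarrow> nat \<Rightarrow> real^'d \<Rightarrow> real^'d" where
  "rev_mean q \<beta> N n x = (\<chi> i. \<integral>y. rev_cond q \<beta> N n x y * y $ i \<partial>lborel)"

definition rev_cov_tr :: "(real^'d \<Rightarrow> real) \<Rightarrow> (nat \<Rightarrow> real) \<Rightarrow> nat \<Rightarrow> nat \<Rightarrow> real^'d \<Rightarrow> real" where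
  "rev_cov_tr q \<beta> N n x =
     (\<Sum>i\<in>UNIV. \<integral>y. rev_cond q \<beta> N n x y * (y $ i - rev_mean q \<beta> N n x $ i)\<^sup>2 \<partial>lborel)"

definition sigma_opt :: "(real^'d \<Rightarrow> real) \<Rightarrow> (nat \<Rightarrow> real) \<Rightarrow> nat \<Rightarrow> nat \<Rightarrow> real" where
  "sigma_opt q \<beta> N n =
     (\<integral>x. marg q \<beta> N n x * rev_cov_tr q \<beta> N n x \<partial>lborel) / real CARD('d)"

end

theory Submission
  imports Defs "HOL-Probability.Probability"
begin

(* The trace of the conditional covariance of x_{n-1} given x_n is the least mean-square error
   of any predictor of x_{n-1} from x_n. Only first and second moments of the forward process
   matter, and these are Gaussian: x_n given x_0 has mean sqrt(abar_n) x_0 and variance bbar_n in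
   every coordinate, and x_{n-1} given (x_n, x_0) has mean mu_til and variance btil_n. For an
   affine predictor u x_n + v the error is therefore btil_n + (c - u)^2 bbar_n + E (affine
   function of x_0)^2, with c the x_n-coefficient of mu_til. Taking u = 1 / sqrt(alpha_n) kills the
   x_0 term and gives beta_n / alpha_n; taking u = c leaves only the x_0 term, which the support
   condition bounds. Conversely, x_{n-1} given x_n is a mixture of Gaussians of variance btil_n,
   so no predictor does better than btil_n. *)

lemma borel_measurable_vec_nth_compose[measurable (raw)]:
  "f \<in> borel_measurable M \<Longrightarrow> (\<lambda>x. (f x :: real^'n) $ i) \<in> borel_measurable M"
  using measurable_compose[OF _ borel_measurable_nth] by blast

lemma nn_integral_mult_bounded_le:
  fixes w k :: "'a \<Rightarrow> real"
  assumes "\<And>x. 0 \<le> w x" "\<And>x. 0 \<le> k x" "\<And>x. k x \<le> C" "w \<in> borel_measurable M"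
  shows "(\<integral>\<^sup>+x. ennreal (w x * k x) \<partial>M) \<le> ennreal C * (\<integral>\<^sup>+x. ennreal (w x) \<partial>M)"
proof -
  have "(\<integral>\<^sup>+x. ennreal (w x * k x) \<partial>M) \<le> (\<integral>\<^sup>+x. ennreal C * ennreal (w x) \<partial>M)"
    using assms(1-3) order_trans[OF assms(2,3)]
    by (intro nn_integral_mono) (auto simp: ennreal_mult'[symmetric] mult.commute intro!: ennreal_leI mult_right_mono)
  also have "\<dots> = ennreal C * (\<integral>\<^sup>+x. ennreal (w x) \<partial>M)"
    by (rule nn_integral_cmult) (use assms(4) in measurable)
  finally show ?thesis .
qed

lemma ennreal_integral_mult_bounded:
  fixes w k :: "'a \<Rightarrow> real"
  assumes "\<And>x. 0 \<le> w x" "\<And>x. 0 \<le> k x" "\<And>x. k x \<le> C"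
    and [measurable]: "w \<in> borel_measurable M" "k \<in> borel_measurable M"
    and "(\<integral>\<^sup>+x. ennreal (w x) \<partial>M) < \<infinity>"
  shows "ennreal (\<integral>x. w x * k x \<partial>M) = (\<integral>\<^sup>+x. ennreal (w x * k x) \<partial>M)"
proof -
  have "(\<integral>\<^sup>+x. ennreal (w x * k x) \<partial>M) < \<infinity>"
    using nn_integral_mult_bounded_le[of w k C M] assms
    by (auto simp: ennreal_mult_less_top le_less_trans)
  then show ?thesis
    using assms(1,2) by (subst nn_integral_eq_integral) (auto intro: integrableI_nonneg)
qed

lemma integral_mult_bounded_le:
  fixes w k :: "'a \<Rightarrow> real"
  assumes "\<And>x. 0 \<le> w x" "\<And>x. 0 \<le> k x" "\<And>x. k x \<le> C"
    and [measurable]: "w \<in> borel_measurable M" "k \<in> borel_measurable M"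
    and "(\<integral>\<^sup>+x. ennreal (w x) \<partial>M) = 1"
  shows "(\<integral>x. w x * k x \<partial>M) \<le> C"
proof -
  have "0 \<le> C"
    using assms(2,3) order_trans by blast
  have "ennreal (\<integral>x. w x * k x \<partial>M) \<le> ennreal C"
    using ennreal_integral_mult_bounded[OF assms(1-5)] nn_integral_mult_bounded_le[of w k C M] assms
    by simp
  then show ?thesis
    using \<open>0 \<le> C\<close> by simp
qed

lemma nn_integral_const_plus:
  fixes f \<phi> :: "'a \<Rightarrow> real"
  assumes [measurable]: "f \<in> borel_measurable M" "\<phi> \<in> borel_measurable M"
    and "\<And>x. 0 \<le> f x" "\<And>x. 0 \<le> \<phi> x" "0 \<le> c" "(\<integral>\<^sup>+x. ennreal (f x) \<partial>M) = 1"
  shows "(\<integral>\<^sup>+x. ennreal (f x * (c + \<phi> x)) \<partial>M) = ennreal c + (\<integral>\<^sup>+x. ennreal (f x * \<phi> x) \<partial>M)"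
proof -
  have "(\<integral>\<^sup>+x. ennreal (f x * (c + \<phi> x)) \<partial>M)
      = (\<integral>\<^sup>+x. ennreal c * ennreal (f x) + ennreal (f x * \<phi> x) \<partial>M)"
    using assms(3-5) by (intro nn_integral_cong) (simp add: distrib_left ennreal_plus ennreal_mult' mult.commute)
  also have "\<dots> = ennreal c + (\<integral>\<^sup>+x. ennreal (f x * \<phi> x) \<partial>M)"
    using assms(6) by (simp add: nn_integral_add nn_integral_cmult)
  finally show ?thesis .
qed

section \<open>Gaussian moments\<close>

lemma nn_integral_lborel_vec_prod:
  fixes f :: "'d::finite \<Rightarrow> real \<Rightarrow> real"
  assumes [measurable]: "\<And>j. f j \<in> borel_measurable borel" and nonneg: "\<And>j t. 0 \<le> f j t"
  shows "(\<integral>\<^sup>+y. ennreal (\<Prod>j\<in>UNIV. f j (y $ j)) \<partial>(lborel :: (real^'d) measure))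
       = (\<Prod>j\<in>UNIV. \<integral>\<^sup>+t. ennreal (f j t) \<partial>lborel)"
proof -
  have Basis: "(Basis :: (real^'d) set) = (\<lambda>j. axis j 1) ` UNIV"
    by (auto simp: Basis_vec_def)
  have inj: "inj (\<lambda>j::'d. axis j (1::real))"
    by (auto intro!: injI simp: axis_eq_axis)
  define idx where "idx b = (THE j. b = axis j (1::real))" for b :: "real^'d"
  have idx: "idx (axis j 1) = j" for j
    unfolding idx_def by (rule the_equality) (auto simp: axis_eq_axis)
  have prod_Basis: "(\<Prod>b\<in>(Basis :: (real^'d) set). h b) = (\<Prod>j\<in>UNIV. h (axis j 1))"
    for h :: "real^'d \<Rightarrow> ennreal"
    unfolding Basis by (simp add: prod.reindex[OF inj])
  have "(\<integral>\<^sup>+y. (\<Prod>b\<in>Basis. ennreal (f (idx b) (y \<bullet> b))) \<partial>(lborel :: (real^'d) measure))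
      = (\<Prod>b\<in>Basis. \<integral>\<^sup>+t. ennreal (f (idx b) t) \<partial>lborel)"
    by (rule nn_integral_lborel_prod) auto
  then show ?thesis
    by (simp add: prod_Basis idx inner_axis prod_ennreal nonneg)
qed

lemma gauss_dens_nonneg: "0 \<le> gauss_dens m s y"
  by (simp add: gauss_dens_def)

lemma gauss_dens_le: "0 < s \<Longrightarrow> gauss_dens m s (y :: real^'d) \<le> (2 * pi * s) powr (- real CARD('d) / 2)"
  by (simp add: gauss_dens_def)

lemma borel_measurable_gauss_dens[measurable (raw)]:
  assumes [measurable]: "f \<in> borel_measurable M" "g \<in> borel_measurable M" "h \<in> borel_measurable M"
  shows "(\<lambda>x. gauss_dens (f x) (g x) (h x :: real^'d)) \<in> borel_measurable M"
  unfolding gauss_dens_def by measurable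

lemma gauss_dens_eq_prod_normal_density:
  assumes "0 < s"
  shows "gauss_dens m s (y :: real^'d) = (\<Prod>j\<in>UNIV. normal_density (m $ j) (sqrt s) (y $ j))"
proof -
  have "(2 * pi * s) powr (- real CARD('d) / 2) = 1 / ((2 * pi * s) powr (real CARD('d) / 2))"
    by (simp add: powr_minus_divide[symmetric])
  also have "\<dots> = 1 / sqrt ((2 * pi * s) ^ CARD('d))"
    using assms by (simp add: powr_half_sqrt_powr powr_realpow)
  also have "\<dots> = (1 / sqrt (2 * pi * s)) ^ CARD('d)"
    by (simp add: real_sqrt_power power_one_over)
  finally have "(2 * pi * s) powr (- real CARD('d) / 2) = (1 / sqrt (2 * pi * s)) ^ CARD('d)" .
  moreover have "(norm (y - m))\<^sup>2 = (\<Sum>j\<in>UNIV. (y $ j - m $ j)\<^sup>2)"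
    unfolding power2_norm_eq_inner inner_vec_def by (simp add: power2_eq_square)
  then have "exp (- (norm (y - m))\<^sup>2 / (2 * s)) = (\<Prod>j\<in>UNIV. exp (- (y $ j - m $ j)\<^sup>2 / (2 * s)))"
    by (simp add: exp_sum[symmetric] sum_divide_distrib[symmetric] sum_negf)
  ultimately show ?thesis
    using assms by (simp add: gauss_dens_def normal_density_def prod.distrib power2_eq_square[of "sqrt s"]
        power2_commute prod_dividef power_one_over)
qed

lemma nn_integral_normal_density_affine_sq:
  assumes "0 < \<sigma>"
  shows "(\<integral>\<^sup>+t. ennreal (normal_density \<mu> \<sigma> t * (A * t + B)\<^sup>2) \<partial>lborel) = ennreal (A\<^sup>2 * \<sigma>\<^sup>2 + (A * \<mu> + B)\<^sup>2)"
proof -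
  have "has_bochner_integral lborel (\<lambda>t. A\<^sup>2 * (normal_density \<mu> \<sigma> t * (t - \<mu>) ^ (2 * 1))
      + (2 * A * (A * \<mu> + B)) * (normal_density \<mu> \<sigma> t * (t - \<mu>) ^ (2 * 0 + 1))
      + (A * \<mu> + B)\<^sup>2 * normal_density \<mu> \<sigma> t)
    (A\<^sup>2 * (fact (2 * 1) / ((2 / \<sigma>\<^sup>2) ^ 1 * fact 1)) + (2 * A * (A * \<mu> + B)) * 0 + (A * \<mu> + B)\<^sup>2 * 1)"
    using integrable_normal_density[OF assms] integral_normal_density[of \<mu> \<sigma>]
    by (intro has_bochner_integral_add has_bochner_integral_mult_right normal_moment_even normal_moment_odd)
       (simp_all add: assms has_bochner_integral_iff)
  then have h: "has_bochner_integral lborel (\<lambda>t. normal_density \<mu> \<sigma> t * (A * t + B)\<^sup>2)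
      (A\<^sup>2 * \<sigma>\<^sup>2 + (A * \<mu> + B)\<^sup>2)"
    by (rule has_bochner_integral_cong[THEN iffD1, rotated 3]) (auto simp: power2_eq_square algebra_simps)
  show ?thesis
    by (rule nn_integral_eq_integrable[THEN iffD2]) (use h in \<open>auto simp: has_bochner_integral_iff\<close>)
qed

text \<open>Mass one, mean \<open>m\<close> and variance \<open>s\<close> in every coordinate: this is all the argument
  needs to know about the forward densities.\<close>

definition has_gauss_moments :: "(real^'d \<Rightarrow> real) \<Rightarrow> real^'d \<Rightarrow> real \<Rightarrow> bool" where
  "has_gauss_moments f m s \<longleftrightarrow> (\<forall>i A B.
     (\<integral>\<^sup>+x. ennreal (f x * (A * x $ i + B)\<^sup>2) \<partial>lborel) = ennreal (A\<^sup>2 * s + (A * m $ i + B)\<^sup>2))"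

lemma has_gauss_moments_nn_integral_1:
  "has_gauss_moments f m s \<Longrightarrow> (\<integral>\<^sup>+x. ennreal (f x) \<partial>lborel) = 1"
  unfolding has_gauss_moments_def by (drule spec[of _ undefined], drule spec[of _ 0], drule spec[of _ 1]) simp

lemma has_gauss_moments_sq_dev:
  "has_gauss_moments f m s \<Longrightarrow>
    (\<integral>\<^sup>+x. ennreal (f x * (x $ i - t)\<^sup>2) \<partial>lborel) = ennreal (s + (m $ i - t)\<^sup>2)"
  unfolding has_gauss_moments_def by (drule spec[of _ i], drule spec[of _ 1], drule spec[of _ "- t"]) simp

lemma has_gauss_moments_gauss_dens:
  fixes m :: "real^'d"
  assumes "0 < s"
  shows "has_gauss_moments (gauss_dens m s) m s"
  unfolding has_gauss_moments_def
proof (intro allI)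
  fix i A B
  define h where "h j t = normal_density (m $ j) (sqrt s) t * (if j = i then (A * t + B)\<^sup>2 else 1)"
    for j t
  have "gauss_dens m s y * (A * y $ i + B)\<^sup>2 = (\<Prod>j\<in>UNIV. h j (y $ j))" for y :: "real^'d"
    using assms by (simp add: gauss_dens_eq_prod_normal_density h_def prod.distrib prod.If_cases Int_absorb1)
  then have "(\<integral>\<^sup>+y. ennreal (gauss_dens m s y * (A * y $ i + B)\<^sup>2) \<partial>lborel)
      = (\<integral>\<^sup>+y. ennreal (\<Prod>j\<in>UNIV. h j (y $ j)) \<partial>lborel)"
    by simp
  also have "\<dots> = (\<Prod>j\<in>UNIV. \<integral>\<^sup>+t. ennreal (h j t) \<partial>lborel)"
    by (rule nn_integral_lborel_vec_prod) (auto simp: h_def)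
  also have "\<dots> = (\<Prod>j\<in>UNIV. if j = i then ennreal (A\<^sup>2 * s + (A * m $ i + B)\<^sup>2) else 1)"
    using assms nn_integral_normal_density_affine_sq[of "sqrt s" _ 0 1]
    by (intro prod.cong refl) (simp add: h_def nn_integral_normal_density_affine_sq)
  also have "\<dots> = ennreal (A\<^sup>2 * s + (A * m $ i + B)\<^sup>2)"
    by (simp add: prod.If_cases Int_absorb1)
  finally show "(\<integral>\<^sup>+y. ennreal (gauss_dens m s y * (A * y $ i + B)\<^sup>2) \<partial>lborel)
      = ennreal (A\<^sup>2 * s + (A * m $ i + B)\<^sup>2)" .
qed

lemma has_gauss_moments_mixture:
  fixes F :: "real^'d \<Rightarrow> real" and K :: "real^'d \<Rightarrow> real^'d \<Rightarrow> real"
  assumes [measurable]: "F \<in> borel_measurable lborel" "case_prod K \<in> borel_measurable (lborel \<Otimes>\<^sub>M lborel)"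
    and F_nonneg: "\<And>x. 0 \<le> F x" and K_nonneg: "\<And>x y. 0 \<le> K x y" and K_le: "\<And>x y. K x y \<le> C"
    and F: "has_gauss_moments F m s" and K: "\<And>x. has_gauss_moments (K x) (p *\<^sub>R x + c) t"
    and "0 \<le> s" "0 \<le> t"
  shows "has_gauss_moments (\<lambda>y. \<integral>x. F x * K x y \<partial>lborel) (p *\<^sub>R m + c) (t + p\<^sup>2 * s)"
  unfolding has_gauss_moments_def
proof (intro allI)
  fix i A B
  have F1: "(\<integral>\<^sup>+x. ennreal (F x) \<partial>lborel) = 1"
    using F by (rule has_gauss_moments_nn_integral_1)
  have mix: "ennreal (\<integral>x. F x * K x y \<partial>lborel) = (\<integral>\<^sup>+x. ennreal (F x * K x y) \<partial>lborel)" for y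
    using F1 by (intro ennreal_integral_mult_bounded[OF F_nonneg K_nonneg K_le]) auto
  have "(\<integral>\<^sup>+y. ennreal ((\<integral>x. F x * K x y \<partial>lborel) * (A * y $ i + B)\<^sup>2) \<partial>lborel)
      = (\<integral>\<^sup>+y. \<integral>\<^sup>+x. ennreal (F x * (K x y * (A * y $ i + B)\<^sup>2)) \<partial>lborel \<partial>lborel)"
    by (simp add: ennreal_mult'' mix nn_integral_multc[symmetric] mult.assoc[symmetric])
  also have "\<dots> = (\<integral>\<^sup>+x. \<integral>\<^sup>+y. ennreal (F x * (K x y * (A * y $ i + B)\<^sup>2)) \<partial>lborel \<partial>lborel)"
    by (rule lborel_pair.Fubini') measurable
  also have "\<dots> = (\<integral>\<^sup>+x. ennreal (F x) * ennreal (A\<^sup>2 * t + (A * (p * x $ i + c $ i) + B)\<^sup>2) \<partial>lborel)"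
    using K[unfolded has_gauss_moments_def]
    by (simp add: ennreal_mult F_nonneg K_nonneg nn_integral_cmult)
  also have "\<dots> = (\<integral>\<^sup>+x. ennreal (F x * (A\<^sup>2 * t + ((A * p) * x $ i + (A * c $ i + B))\<^sup>2)) \<partial>lborel)"
    by (intro nn_integral_cong) (simp add: ennreal_mult'[symmetric] F_nonneg algebra_simps)
  also have "\<dots> = ennreal (A\<^sup>2 * t) + ennreal ((A * p)\<^sup>2 * s + ((A * p) * m $ i + (A * c $ i + B))\<^sup>2)"
    using F[unfolded has_gauss_moments_def] F1 \<open>0 \<le> t\<close>
    by (subst nn_integral_const_plus) (auto simp: F_nonneg)
  also have "\<dots> = ennreal (A\<^sup>2 * (t + p\<^sup>2 * s) + (A * (p *\<^sub>R m + c) $ i + B)\<^sup>2)"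
    using \<open>0 \<le> s\<close> \<open>0 \<le> t\<close>
    by (subst ennreal_plus[symmetric]) (auto simp: algebra_simps power_mult_distrib)
  finally show "(\<integral>\<^sup>+y. ennreal ((\<integral>x. F x * K x y \<partial>lborel) * (A * y $ i + B)\<^sup>2) \<partial>lborel)
      = ennreal (A\<^sup>2 * (t + p\<^sup>2 * s) + (A * (p *\<^sub>R m + c) $ i + B)\<^sup>2)" .
qed

text \<open>Boundedness makes the Bochner integrals defining mixtures of such kernels agree with
  their nonnegative counterparts.\<close>

definition gauss_moment_kernel :: "(real^'d \<Rightarrow> real^'d \<Rightarrow> real) \<Rightarrow> real \<Rightarrow> real \<Rightarrow> bool" where
  "gauss_moment_kernel F a s \<longleftrightarrow> case_prod F \<in> borel_measurable (lborel \<Otimes>\<^sub>M lborel)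
     \<and> (\<forall>x0 x. 0 \<le> F x0 x) \<and> (\<exists>C. \<forall>x0 x. F x0 x \<le> C)
     \<and> (\<forall>x0. has_gauss_moments (F x0) (a *\<^sub>R x0) s)"

lemma gauss_moment_kernel_gauss_dens:
  "0 < s \<Longrightarrow> gauss_moment_kernel (\<lambda>x0. gauss_dens (a *\<^sub>R x0) s) a s"
  unfolding gauss_moment_kernel_def
  by (auto simp: gauss_dens_nonneg has_gauss_moments_gauss_dens intro: gauss_dens_le)

lemma gauss_moment_kernel_mixture:
  fixes F :: "real^'d \<Rightarrow> real^'d \<Rightarrow> real"
  assumes "gauss_moment_kernel F a s" "0 \<le> s" "0 < t"
  shows "gauss_moment_kernel (\<lambda>x0 y. \<integral>x. F x0 x * gauss_dens (p *\<^sub>R x + c *\<^sub>R x0) t y \<partial>lborel)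
    (p * a + c) (t + p\<^sup>2 * s)"
proof -
  have [measurable]: "case_prod F \<in> borel_measurable (lborel \<Otimes>\<^sub>M lborel)"
    and F_nonneg: "\<And>x0 x. 0 \<le> F x0 x" and F_moments: "\<And>x0. has_gauss_moments (F x0) (a *\<^sub>R x0) s"
    using assms(1) by (auto simp: gauss_moment_kernel_def)
  define C where "C = (2 * pi * t) powr (- real CARD('d) / 2)"
  have K_le: "gauss_dens (p *\<^sub>R x + c *\<^sub>R x0) t y \<le> C" for x x0 y :: "real^'d"
    using gauss_dens_le[OF \<open>0 < t\<close>] by (simp add: C_def)
  have "has_gauss_moments (\<lambda>y. \<integral>x. F x0 x * gauss_dens (p *\<^sub>R x + c *\<^sub>R x0) t y \<partial>lborel)
      (p *\<^sub>R (a *\<^sub>R x0) + c *\<^sub>R x0) (t + p\<^sup>2 * s)" for x0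
    using assms(2,3)
    by (intro has_gauss_moments_mixture[OF _ _ F_nonneg gauss_dens_nonneg K_le F_moments]
        has_gauss_moments_gauss_dens) auto
  moreover have "integral\<^sup>L lborel (\<lambda>x. F x0 x * gauss_dens (p *\<^sub>R x + c *\<^sub>R x0) t y) \<le> C" for x0 y
    using has_gauss_moments_nn_integral_1[OF F_moments]
    by (intro integral_mult_bounded_le[OF F_nonneg gauss_dens_nonneg K_le]) auto
  ultimately show ?thesis
    unfolding gauss_moment_kernel_def
    by (auto simp: scaleR_add_left F_nonneg gauss_dens_nonneg intro!: integral_nonneg_AE)
qed

section \<open>Mean-square deviation and the covariance trace\<close>

lemma has_bochner_integral_sq_dev:
  fixes g X :: "'a \<Rightarrow> real"
  assumes [measurable]: "g \<in> borel_measurable M" "X \<in> borel_measurable M"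
    and g_nonneg: "\<And>y. 0 \<le> g y" and "integrable M g" "integrable M (\<lambda>y. g y * (X y - c)\<^sup>2)"
  shows "has_bochner_integral M (\<lambda>y. g y * (X y - t)\<^sup>2)
    ((\<integral>y. g y * (X y)\<^sup>2 \<partial>M) - 2 * t * (\<integral>y. g y * X y \<partial>M) + t\<^sup>2 * (\<integral>y. g y \<partial>M))"
proof -
  have X2: "integrable M (\<lambda>y. g y * (X y)\<^sup>2)"
  proof (rule Bochner_Integration.integrable_bound)
    show "integrable M (\<lambda>y. 2 * (g y * (X y - c)\<^sup>2) + 2 * c\<^sup>2 * g y)"
      using assms by auto
    have "g y * (X y)\<^sup>2 \<le> g y * (2 * (X y - c)\<^sup>2 + 2 * c\<^sup>2)" for y
      using zero_le_power2[of "X y - 2 * c"] g_nonneg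
      by (intro mult_left_mono) (simp_all add: power2_eq_square algebra_simps)
    then show "AE y in M. norm (g y * (X y)\<^sup>2) \<le> norm (2 * (g y * (X y - c)\<^sup>2) + 2 * c\<^sup>2 * g y)"
      using g_nonneg by (intro AE_I2) (simp add: algebra_simps)
  qed simp
  have X1: "integrable M (\<lambda>y. g y * X y)"
  proof (rule Bochner_Integration.integrable_bound)
    show "integrable M (\<lambda>y. g y + g y * (X y)\<^sup>2)"
      using X2 assms by auto
    have "\<bar>X y\<bar> \<le> 1 + (X y)\<^sup>2" for y
      using zero_le_power2[of "\<bar>X y\<bar> - 1"] by (simp add: power2_eq_square algebra_simps)
    then have "g y * \<bar>X y\<bar> \<le> g y * (1 + (X y)\<^sup>2)" for y
      using g_nonneg by (intro mult_left_mono)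
    then show "AE y in M. norm (g y * X y) \<le> norm (g y + g y * (X y)\<^sup>2)"
      using g_nonneg by (intro AE_I2) (simp add: abs_mult algebra_simps)
  qed simp
  have "has_bochner_integral M (\<lambda>y. g y * (X y)\<^sup>2 - (2 * t) * (g y * X y) + t\<^sup>2 * g y)
      ((\<integral>y. g y * (X y)\<^sup>2 \<partial>M) - 2 * t * (\<integral>y. g y * X y \<partial>M) + t\<^sup>2 * (\<integral>y. g y \<partial>M))"
    using X1 X2 assms
    by (intro has_bochner_integral_add has_bochner_integral_diff has_bochner_integral_mult_right)
       (auto simp: has_bochner_integral_iff)
  then show ?thesis
    by (rule has_bochner_integral_cong[THEN iffD1, rotated 3]) (auto simp: power2_eq_square algebra_simps)
qed

lemma integral_sq_dev_eq:
  fixes g X :: "'a \<Rightarrow> real"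
  assumes [measurable]: "g \<in> borel_measurable M" "X \<in> borel_measurable M"
    and "\<And>y. 0 \<le> g y" "integrable M g" "integrable M (\<lambda>y. g y * (X y - c)\<^sup>2)"
    and "(\<integral>y. g y \<partial>M) = W" "W \<noteq> 0"
  defines "m \<equiv> (\<integral>y. g y * X y \<partial>M) / W"
  shows "(\<integral>y. g y * (X y - t)\<^sup>2 \<partial>M) = (\<integral>y. g y * (X y - m)\<^sup>2 \<partial>M) + W * (m - t)\<^sup>2"
proof -
  define E1 where "E1 = (\<integral>y. g y * X y \<partial>M)"
  define E2 where "E2 = (\<integral>y. g y * (X y)\<^sup>2 \<partial>M)"
  have expand: "(\<integral>y. g y * (X y - s)\<^sup>2 \<partial>M) = E2 - 2 * s * E1 + s\<^sup>2 * W" for s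
    using has_bochner_integral_sq_dev[OF assms(1-5), THEN has_bochner_integral_integral_eq] assms(6)
    by (simp add: E1_def E2_def)
  show ?thesis
    unfolding expand m_def E1_def[symmetric] using \<open>W \<noteq> 0\<close> by (simp add: field_simps power2_eq_square)
qed

definition cov_trace :: "(real^'d \<Rightarrow> real) \<Rightarrow> real" where
  "cov_trace g = (\<Sum>i\<in>UNIV. \<integral>y. g y * (y $ i - (\<chi> j. \<integral>y. g y * y $ j \<partial>lborel) $ i)\<^sup>2 \<partial>lborel)"

lemma cov_trace_density_bounds:
  fixes g :: "real^'d \<Rightarrow> real"
  assumes [measurable]: "g \<in> borel_measurable lborel" and g_nonneg: "\<And>y. 0 \<le> g y"
    and g_nn_integral: "(\<integral>\<^sup>+y. ennreal (g y) \<partial>lborel) = ennreal W" and "0 < W"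
    and finite: "\<And>i. (\<integral>\<^sup>+y. ennreal (g y * (y $ i - c $ i)\<^sup>2) \<partial>lborel) < \<infinity>"
  shows "ennreal (W * cov_trace (\<lambda>y. g y / W)) \<le> (\<Sum>i\<in>UNIV. \<integral>\<^sup>+y. ennreal (g y * (y $ i - t $ i)\<^sup>2) \<partial>lborel)"
    and "(\<And>i s. ennreal (L * W) \<le> (\<integral>\<^sup>+y. ennreal (g y * (y $ i - s)\<^sup>2) \<partial>lborel))
      \<Longrightarrow> real CARD('d) * L * W \<le> W * cov_trace (\<lambda>y. g y / W)"
proof -
  have int_g: "integrable lborel g" and W: "(\<integral>y. g y \<partial>lborel) = W"
    using g_nn_integral \<open>0 < W\<close> g_nonneg
    by (auto simp: integrable_iff_bounded nn_integral_eq_integrable)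
  have int_c: "integrable lborel (\<lambda>y. g y * (y $ i - c $ i)\<^sup>2)" for i
    using finite[of i] g_nonneg by (intro integrableI_nonneg) auto
  define m where "m i = (\<integral>y. g y * y $ i \<partial>lborel) / W" for i
  have min: "(\<integral>y. g y * (y $ i - m i)\<^sup>2 \<partial>lborel) \<le> (\<integral>y. g y * (y $ i - s)\<^sup>2 \<partial>lborel)" for i s
    using integral_sq_dev_eq[OF _ _ g_nonneg int_g int_c W, where t=s] \<open>0 < W\<close>
    by (simp add: m_def)
  have nn: "ennreal (\<integral>y. g y * (y $ i - s)\<^sup>2 \<partial>lborel) = (\<integral>\<^sup>+y. ennreal (g y * (y $ i - s)\<^sup>2) \<partial>lborel)"
    for i s
    using has_bochner_integral_sq_dev[OF _ _ g_nonneg int_g int_c, where t=s]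
    by (intro nn_integral_eq_integral[symmetric]) (auto simp: g_nonneg has_bochner_integral_iff)
  have cov: "W * cov_trace (\<lambda>y. g y / W) = (\<Sum>i\<in>UNIV. \<integral>y. g y * (y $ i - m i)\<^sup>2 \<partial>lborel)"
    using \<open>0 < W\<close> by (simp add: cov_trace_def m_def sum_distrib_left)
  have "ennreal (W * cov_trace (\<lambda>y. g y / W)) \<le> ennreal (\<Sum>i\<in>UNIV. \<integral>y. g y * (y $ i - t $ i)\<^sup>2 \<partial>lborel)"
    unfolding cov by (intro ennreal_leI sum_mono min)
  also have "\<dots> = (\<Sum>i\<in>UNIV. \<integral>\<^sup>+y. ennreal (g y * (y $ i - t $ i)\<^sup>2) \<partial>lborel)"
    by (simp add: nn[symmetric] g_nonneg sum_ennreal)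
  finally show "ennreal (W * cov_trace (\<lambda>y. g y / W)) \<le> (\<Sum>i\<in>UNIV. \<integral>\<^sup>+y. ennreal (g y * (y $ i - t $ i)\<^sup>2) \<partial>lborel)" .
  assume lower: "\<And>i s. ennreal (L * W) \<le> (\<integral>\<^sup>+y. ennreal (g y * (y $ i - s)\<^sup>2) \<partial>lborel)"
  have "0 \<le> (\<integral>y. g y * (y $ i - m i)\<^sup>2 \<partial>lborel)" for i
    by (intro integral_nonneg_AE AE_I2) (simp add: g_nonneg)
  then have "L * W \<le> (\<integral>y. g y * (y $ i - m i)\<^sup>2 \<partial>lborel)" for i
    using lower[of i "m i"] by (auto simp: nn[symmetric] ennreal_le_iff2 intro: order_trans)
  then show "real CARD('d) * L * W \<le> W * cov_trace (\<lambda>y. g y / W)"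
    unfolding cov using sum_mono[of "UNIV :: 'd set" "\<lambda>_. L * W"] by (simp add: mult.assoc)
qed

lemma cov_trace_nonneg: "(\<And>y. 0 \<le> g y) \<Longrightarrow> 0 \<le> cov_trace g"
  unfolding cov_trace_def by (intro sum_nonneg integral_nonneg_AE AE_I2) simp

context
  fixes J :: "real^'d \<Rightarrow> real^'d \<Rightarrow> real" and M :: "real^'d \<Rightarrow> real"
    and c :: "'d \<Rightarrow> real^'d \<Rightarrow> real" and U :: real
  assumes J_measurable [measurable]: "case_prod J \<in> borel_measurable (lborel \<Otimes>\<^sub>M lborel)"
    and M_measurable [measurable]: "M \<in> borel_measurable lborel"
    and c_measurable [measurable]: "\<And>i. c i \<in> borel_measurable lborel"
    and J_nonneg: "\<And>y x. 0 \<le> J y x" and M_nonneg: "\<And>x. 0 \<le> M x"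
    and J_marginal: "\<And>x. (\<integral>\<^sup>+y. ennreal (J y x) \<partial>lborel) = ennreal (M x)"
    and err: "(\<integral>\<^sup>+x. (\<Sum>i\<in>UNIV. \<integral>\<^sup>+y. ennreal (J y x * (y $ i - c i x)\<^sup>2) \<partial>lborel) \<partial>lborel)
      \<le> ennreal (real CARD('d) * U)"
    and U_nonneg: "0 \<le> U"
begin

lemma AE_cov_trace_bounds:
  "AE x in lborel. ennreal (M x * cov_trace (\<lambda>y. J y x / M x))
      \<le> (\<Sum>i\<in>UNIV. \<integral>\<^sup>+y. ennreal (J y x * (y $ i - c i x)\<^sup>2) \<partial>lborel)
    \<and> ((\<forall>t i. ennreal (L * M x) \<le> (\<integral>\<^sup>+y. ennreal (J y x * (y $ i - t)\<^sup>2) \<partial>lborel))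
      \<longrightarrow> real CARD('d) * L * M x \<le> M x * cov_trace (\<lambda>y. J y x / M x))"
proof -
  have "AE x in lborel. (\<Sum>i\<in>UNIV. \<integral>\<^sup>+y. ennreal (J y x * (y $ i - c i x)\<^sup>2) \<partial>lborel) \<noteq> \<infinity>"
    using err by (intro nn_integral_PInf_AE) (auto simp: top_unique)
  then show ?thesis
  proof eventually_elim
    case (elim x)
    show ?case
    proof (cases "M x = 0")
      case False
      then have "0 < M x"
        using M_nonneg[of x] by simp
      have "(\<integral>\<^sup>+y. ennreal (J y x * (y $ i - (\<chi> j. c j x) $ i)\<^sup>2) \<partial>lborel) < \<infinity>" for i
        using elim member_le_sum[of i UNIV "\<lambda>i. \<integral>\<^sup>+y. ennreal (J y x * (y $ i - c i x)\<^sup>2) \<partial>lborel"]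
        by (simp add: less_top[symmetric] top_unique)
      note bounds = cov_trace_density_bounds[of "\<lambda>y. J y x", OF _ J_nonneg J_marginal \<open>0 < M x\<close> this]
      show ?thesis
        using bounds(1)[of "\<chi> j. c j x"] bounds(2)[of L] by auto
    qed simp
  qed
qed

lemma cov_trace_integrable: "integrable lborel (\<lambda>x. M x * cov_trace (\<lambda>y. J y x / M x))"
  and integral_cov_trace_le: "(\<integral>x. M x * cov_trace (\<lambda>y. J y x / M x) \<partial>lborel) \<le> real CARD('d) * U"
proof -
  define V where "V x = M x * cov_trace (\<lambda>y. J y x / M x)" for x
  have [measurable]: "V \<in> borel_measurable lborel"
    unfolding V_def cov_trace_def vec_lambda_beta by measurable
  have V_nonneg: "0 \<le> V x" for x
    unfolding V_def using M_nonneg J_nonneg by (simp add: cov_trace_nonneg)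
  have "(\<integral>\<^sup>+x. ennreal (V x) \<partial>lborel)
      \<le> (\<integral>\<^sup>+x. (\<Sum>i\<in>UNIV. \<integral>\<^sup>+y. ennreal (J y x * (y $ i - c i x)\<^sup>2) \<partial>lborel) \<partial>lborel)"
    using AE_cov_trace_bounds[of 0] by (intro nn_integral_mono_AE) (auto simp: V_def)
  also have "\<dots> \<le> ennreal (real CARD('d) * U)"
    by (rule err)
  finally have V_le: "(\<integral>\<^sup>+x. ennreal (V x) \<partial>lborel) \<le> ennreal (real CARD('d) * U)" .
  then have "integrable lborel V"
    using V_nonneg by (intro integrableI_nonneg) (auto simp: top_unique intro: le_less_trans)
  then show "integrable lborel (\<lambda>x. M x * cov_trace (\<lambda>y. J y x / M x))"
    by (simp add: V_def[abs_def])
  show "(\<integral>x. M x * cov_trace (\<lambda>y. J y x / M x) \<partial>lborel) \<le> real CARD('d) * U"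
    using \<open>integrable lborel V\<close> V_le V_nonneg U_nonneg
    by (simp add: V_def[symmetric] nn_integral_eq_integral)
qed

lemma integral_cov_trace_ge:
  assumes "(\<integral>\<^sup>+x. ennreal (M x) \<partial>lborel) = 1"
    and "\<And>x t i. ennreal (L * M x) \<le> (\<integral>\<^sup>+y. ennreal (J y x * (y $ i - t)\<^sup>2) \<partial>lborel)"
  shows "real CARD('d) * L \<le> (\<integral>x. M x * cov_trace (\<lambda>y. J y x / M x) \<partial>lborel)"
proof -
  have "integrable lborel M" "(\<integral>x. M x \<partial>lborel) = 1"
    using assms(1) M_nonneg by (auto simp: integrableI_nonneg integral_eq_nn_integral)
  then have "real CARD('d) * L = (\<integral>x. real CARD('d) * L * M x \<partial>lborel)"
    by simp
  also have "\<dots> \<le> (\<integral>x. M x * cov_trace (\<lambda>y. J y x / M x) \<partial>lborel)"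
    using AE_cov_trace_bounds[of L] assms(2) \<open>integrable lborel M\<close> cov_trace_integrable
    by (intro integral_mono_AE) auto
  finally show ?thesis .
qed

end

lemma sq_dist_midpoint_le:
  fixes x a b :: real
  assumes "a \<le> x" "x \<le> b"
  shows "(x - (a + b) / 2)\<^sup>2 \<le> ((b - a) / 2)\<^sup>2"
proof -
  have "\<bar>x - (a + b) / 2\<bar> \<le> (b - a) / 2" "0 \<le> (b - a) / 2"
    using assms by (simp_all add: abs_le_iff field_simps)
  then show ?thesis
    using power2_le_iff_abs_le by blast
qed

section \<open>The noise schedule and the forward densities\<close>

definition mu_coeff_xn :: "(nat \<Rightarrow> real) \<Rightarrow> nat \<Rightarrow> real" where
  "mu_coeff_xn \<beta> n = sqrt (alpha \<beta> n) * bbar \<beta> (n - 1) / bbar \<beta> n"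

definition mu_coeff_x0 :: "(nat \<Rightarrow> real) \<Rightarrow> nat \<Rightarrow> real" where
  "mu_coeff_x0 \<beta> n = sqrt (abar \<beta> (n - 1)) * \<beta> n / bbar \<beta> n"

locale noise_schedule =
  fixes \<beta> :: "nat \<Rightarrow> real" and N :: nat
  assumes beta_bounds: "\<And>k. k \<in> {1..N} \<Longrightarrow> 0 < \<beta> k \<and> \<beta> k < 1"
begin

lemma alpha_bounds: "n \<in> {1..N} \<Longrightarrow> 0 < alpha \<beta> n \<and> alpha \<beta> n < 1"
  using beta_bounds[of n] by (simp add: alpha_def)

lemma abar_0 [simp]: "abar \<beta> 0 = 1"
  by (simp add: abar_def)

lemma bbar_0 [simp]: "bbar \<beta> 0 = 0"
  by (simp add: bbar_def)

lemma abar_rec: "1 \<le> n \<Longrightarrow> abar \<beta> n = abar \<beta> (n - 1) * alpha \<beta> n"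
  by (cases n) (simp_all add: abar_def prod.nat_ivl_Suc' mult.commute)

lemma bbar_rec: "1 \<le> n \<Longrightarrow> bbar \<beta> n = alpha \<beta> n * bbar \<beta> (n - 1) + \<beta> n"
  by (simp add: bbar_def abar_rec alpha_def algebra_simps)

lemma abar_bounds: "n \<le> N \<Longrightarrow> 0 < abar \<beta> n \<and> abar \<beta> n \<le> 1 \<and> (1 \<le> n \<longrightarrow> abar \<beta> n < 1)"
proof (induction n)
  case (Suc n)
  then have "0 < alpha \<beta> (Suc n)" "alpha \<beta> (Suc n) < 1" "0 < abar \<beta> n" "abar \<beta> n \<le> 1"
    using alpha_bounds[of "Suc n"] by auto
  then have "abar \<beta> n * alpha \<beta> (Suc n) < abar \<beta> n * 1"
    by (intro mult_strict_left_mono) auto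
  then have "abar \<beta> n * alpha \<beta> (Suc n) < 1"
    using \<open>abar \<beta> n \<le> 1\<close> by linarith
  then show ?case
    using abar_rec[of "Suc n"] \<open>0 < alpha \<beta> (Suc n)\<close> \<open>0 < abar \<beta> n\<close> by simp
qed simp

lemma bbar_nonneg: "n \<le> N \<Longrightarrow> 0 \<le> bbar \<beta> n"
  using abar_bounds[of n] by (simp add: bbar_def)

lemma bbar_pos: "n \<in> {1..N} \<Longrightarrow> 0 < bbar \<beta> n"
  using abar_bounds[of n] by (simp add: bbar_def)

lemma btil_nonneg:
  assumes "n \<in> {1..N}"
  shows "0 \<le> btil \<beta> n"
proof -
  have "0 \<le> bbar \<beta> (n - 1)"
    using assms by (intro bbar_nonneg) auto
  then show ?thesis
    using bbar_pos[OF assms] beta_bounds[OF assms] by (simp add: btil_def)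
qed

lemma btil_pos:
  assumes "n \<in> {2..N}"
  shows "0 < btil \<beta> n"
proof -
  have "0 < bbar \<beta> (n - 1)"
    using assms by (intro bbar_pos) auto
  moreover have "0 < bbar \<beta> n" "0 < \<beta> n"
    using assms bbar_pos[of n] beta_bounds[of n] by auto
  ultimately show ?thesis
    by (simp add: btil_def)
qed

lemma bbar_diff_btil: "n \<in> {1..N} \<Longrightarrow> bbar \<beta> (n - 1) - btil \<beta> n = alpha \<beta> n * (bbar \<beta> (n - 1))\<^sup>2 / bbar \<beta> n"
  using bbar_pos[of n] bbar_rec[of n]
  by (simp add: btil_def field_simps power2_eq_square)

lemma mu_coeff_mean:
  assumes "n \<in> {1..N}"
  shows "mu_coeff_xn \<beta> n * sqrt (abar \<beta> n) + mu_coeff_x0 \<beta> n = sqrt (abar \<beta> (n - 1))"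
proof -
  have "0 < bbar \<beta> n" "0 < alpha \<beta> n"
    using assms bbar_pos alpha_bounds by auto
  have "mu_coeff_xn \<beta> n * sqrt (abar \<beta> n) + mu_coeff_x0 \<beta> n
      = sqrt (abar \<beta> (n - 1)) * (alpha \<beta> n * bbar \<beta> (n - 1) + \<beta> n) / bbar \<beta> n"
    using assms \<open>0 < alpha \<beta> n\<close>
    by (simp add: mu_coeff_xn_def mu_coeff_x0_def abar_rec real_sqrt_mult add_divide_distrib algebra_simps)
  also have "\<dots> = sqrt (abar \<beta> (n - 1))"
    using bbar_rec[of n] assms \<open>0 < bbar \<beta> n\<close> by simp
  finally show ?thesis .
qed

lemma btil_plus_mu_coeff_xn_sq:
  assumes "n \<in> {1..N}"
  shows "btil \<beta> n + (mu_coeff_xn \<beta> n)\<^sup>2 * bbar \<beta> n = bbar \<beta> (n - 1)"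
proof -
  have "0 < bbar \<beta> n" "0 < alpha \<beta> n"
    using assms bbar_pos alpha_bounds by auto
  then have "btil \<beta> n + (mu_coeff_xn \<beta> n)\<^sup>2 * bbar \<beta> n
      = bbar \<beta> (n - 1) * (alpha \<beta> n * bbar \<beta> (n - 1) + \<beta> n) / bbar \<beta> n"
    by (simp add: btil_def mu_coeff_xn_def power_divide power_mult_distrib power2_eq_square field_simps)
  also have "\<dots> = bbar \<beta> (n - 1)"
    using bbar_rec[of n] assms \<open>0 < bbar \<beta> n\<close> by simp
  finally show ?thesis .
qed

lemma btil_plus_sq_mu_coeff_xn_minus_inv_sqrt_alpha:
  assumes "n \<in> {1..N}"
  shows "btil \<beta> n + (mu_coeff_xn \<beta> n - 1 / sqrt (alpha \<beta> n))\<^sup>2 * bbar \<beta> n = \<beta> n / alpha \<beta> n"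
proof -
  have "0 < bbar \<beta> n" "0 < alpha \<beta> n"
    using assms bbar_pos alpha_bounds by auto
  have rec: "alpha \<beta> n * bbar \<beta> (n - 1) = bbar \<beta> n - \<beta> n"
    using assms by (simp add: bbar_rec)
  have "mu_coeff_xn \<beta> n - 1 / sqrt (alpha \<beta> n)
      = (alpha \<beta> n * bbar \<beta> (n - 1) - bbar \<beta> n) / (sqrt (alpha \<beta> n) * bbar \<beta> n)"
    using \<open>0 < bbar \<beta> n\<close> \<open>0 < alpha \<beta> n\<close>
    by (simp add: mu_coeff_xn_def field_simps real_sqrt_mult[symmetric])
  also have "\<dots> = - \<beta> n / (sqrt (alpha \<beta> n) * bbar \<beta> n)"
    using rec by simp
  finally have diff: "mu_coeff_xn \<beta> n - 1 / sqrt (alpha \<beta> n) = - \<beta> n / (sqrt (alpha \<beta> n) * bbar \<beta> n)" .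
  have "btil \<beta> n + (mu_coeff_xn \<beta> n - 1 / sqrt (alpha \<beta> n))\<^sup>2 * bbar \<beta> n
      = \<beta> n * (alpha \<beta> n * bbar \<beta> (n - 1) + \<beta> n) / (alpha \<beta> n * bbar \<beta> n)"
    unfolding diff using \<open>0 < bbar \<beta> n\<close> \<open>0 < alpha \<beta> n\<close>
    by (simp add: btil_def power_divide power_mult_distrib power2_eq_square field_simps)
  also have "\<dots> = \<beta> n / alpha \<beta> n"
    using rec \<open>0 < bbar \<beta> n\<close> by simp
  finally show ?thesis .
qed

lemma mu_til_eq:
  assumes "n \<in> {1..N}"
  shows "mu_til \<beta> n x x0 = mu_coeff_xn \<beta> n *\<^sub>R x + mu_coeff_x0 \<beta> n *\<^sub>R x0"
proof -
  have "0 < bbar \<beta> n" "0 \<le> bbar \<beta> (n - 1)" "0 < alpha \<beta> n"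
    using assms bbar_pos[of n] bbar_nonneg[of "n - 1"] alpha_bounds[of n] by auto
  then have "sqrt (bbar \<beta> (n - 1) - btil \<beta> n) / sqrt (bbar \<beta> n) = mu_coeff_xn \<beta> n"
    unfolding bbar_diff_btil[OF assms] mu_coeff_xn_def
    by (simp add: real_sqrt_mult real_sqrt_divide)
  moreover have "sqrt (abar \<beta> (n - 1)) - mu_coeff_xn \<beta> n * sqrt (abar \<beta> n) = mu_coeff_x0 \<beta> n"
    using mu_coeff_mean[OF assms] by simp
  ultimately show ?thesis
    unfolding mu_til_def by (simp add: algebra_simps flip: scaleR_diff_left)
qed

lemma gauss_moment_kernel_fwd_cond_aux:
  "k < N \<Longrightarrow> gauss_moment_kernel (fwd_cond_aux \<beta> N k :: real^'d \<Rightarrow> real^'d \<Rightarrow> real)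
     (sqrt (abar \<beta> (N - k))) (bbar \<beta> (N - k))"
proof (induction k)
  case 0
  then have "0 < bbar \<beta> N"
    by (intro bbar_pos) auto
  then show ?case
    using gauss_moment_kernel_gauss_dens by (simp add: fun_eq_iff)
next
  case (Suc k)
  define n where "n = N - k"
  have n: "n \<in> {2..N}" "N - Suc k = n - 1"
    using Suc.prems by (auto simp: n_def)
  have step: "fwd_cond_aux \<beta> N (Suc k) = (\<lambda>x0 y. \<integral>x. fwd_cond_aux \<beta> N k x0 x
      * gauss_dens (mu_coeff_xn \<beta> n *\<^sub>R x + mu_coeff_x0 \<beta> n *\<^sub>R x0) (btil \<beta> n) y \<partial>lborel)"
    using n by (simp add: fun_eq_iff mu_til_eq n_def)
  have "gauss_moment_kernel (\<lambda>x0 y. \<integral>x. fwd_cond_aux \<beta> N k x0 x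
      * gauss_dens (mu_coeff_xn \<beta> n *\<^sub>R x + mu_coeff_x0 \<beta> n *\<^sub>R x0) (btil \<beta> n) (y :: real^'d) \<partial>lborel)
      (mu_coeff_xn \<beta> n * sqrt (abar \<beta> n) + mu_coeff_x0 \<beta> n) (btil \<beta> n + (mu_coeff_xn \<beta> n)\<^sup>2 * bbar \<beta> n)"
    using Suc n by (intro gauss_moment_kernel_mixture btil_pos bbar_nonneg) (auto simp: n_def)
  then show ?case
    unfolding step n(2) using n mu_coeff_mean[of n] btil_plus_mu_coeff_xn_sq[of n] by simp
qed

lemma gauss_moment_kernel_fwd_cond:
  assumes "n \<in> {1..N}"
  shows "gauss_moment_kernel (fwd_cond \<beta> N n :: real^'d \<Rightarrow> real^'d \<Rightarrow> real) (sqrt (abar \<beta> n)) (bbar \<beta> n)"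
proof -
  have "N - n < N" "N - (N - n) = n"
    using assms by auto
  then show ?thesis
    using gauss_moment_kernel_fwd_cond_aux[of "N - n"] by (simp add: fwd_cond_def[abs_def])
qed

end

locale reverse_step = noise_schedule \<beta> N for \<beta> N +
  fixes q :: "real^'d \<Rightarrow> real" and n :: nat
  assumes q_measurable [measurable]: "q \<in> borel_measurable lborel"
    and q_nonneg: "\<And>x. 0 \<le> q x"
    and q_nn_integral: "(\<integral>\<^sup>+x. ennreal (q x) \<partial>lborel) = 1"
    and n_range: "n \<in> {1..N}"
begin

abbreviation "fwd_dens \<equiv> fwd_cond \<beta> N n :: real^'d \<Rightarrow> real^'d \<Rightarrow> real"

lemma
  shows fwd_dens_measurable [measurable]: "case_prod fwd_dens \<in> borel_measurable (lborel \<Otimes>\<^sub>M lborel)"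
    and fwd_dens_nonneg: "0 \<le> fwd_dens x0 x"
    and fwd_dens_bounded: "\<exists>C. \<forall>x0 x. fwd_dens x0 x \<le> C"
    and fwd_dens_gauss_moments: "has_gauss_moments (fwd_dens x0) (sqrt (abar \<beta> n) *\<^sub>R x0) (bbar \<beta> n)"
  using gauss_moment_kernel_fwd_cond[OF n_range] by (auto simp: gauss_moment_kernel_def)

lemma fwd_dens_nn_integral: "(\<integral>\<^sup>+x. ennreal (fwd_dens x0 x) \<partial>lborel) = 1"
  using fwd_dens_gauss_moments by (rule has_gauss_moments_nn_integral_1)

lemma ennreal_marg: "ennreal (marg q \<beta> N n x) = (\<integral>\<^sup>+x0. ennreal (q x0 * fwd_dens x0 x) \<partial>lborel)"
proof -
  obtain C where "\<And>x0 x. fwd_dens x0 x \<le> C"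
    using fwd_dens_bounded by blast
  then show ?thesis
    unfolding marg_def
    by (intro ennreal_integral_mult_bounded) (auto simp: q_nonneg fwd_dens_nonneg q_nn_integral)
qed

lemma marg_measurable [measurable]: "marg q \<beta> N n \<in> borel_measurable lborel"
  unfolding marg_def[abs_def] by measurable

lemma marg_nonneg: "0 \<le> marg q \<beta> N n x"
  unfolding marg_def by (intro integral_nonneg_AE AE_I2) (simp add: q_nonneg fwd_dens_nonneg)

lemma marg_nn_integral: "(\<integral>\<^sup>+x. ennreal (marg q \<beta> N n x) \<partial>lborel) = 1"
proof -
  have "(\<integral>\<^sup>+x. ennreal (marg q \<beta> N n x) \<partial>lborel)
      = (\<integral>\<^sup>+x0. \<integral>\<^sup>+x. ennreal (q x0) * ennreal (fwd_dens x0 x) \<partial>lborel \<partial>lborel)"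
    unfolding ennreal_marg by (subst lborel_pair.Fubini') (simp_all add: ennreal_mult q_nonneg fwd_dens_nonneg)
  also have "\<dots> = 1"
    by (simp add: nn_integral_cmult fwd_dens_nn_integral q_nn_integral)
  finally show ?thesis .
qed

abbreviation "posterior x x0 \<equiv> gauss_dens (mu_til \<beta> n x x0) (btil \<beta> n) :: real^'d \<Rightarrow> real"

lemma joint_eq_1: "n = 1 \<Longrightarrow> joint q \<beta> N n y x = q y * fwd_dens y x"
  by (simp add: joint_def)

lemma joint_eq: "n \<noteq> 1 \<Longrightarrow> joint q \<beta> N n y x = (\<integral>x0. q x0 * fwd_dens x0 x * posterior x x0 y \<partial>lborel)"
  by (simp add: joint_def)

lemma joint_measurable [measurable]: "case_prod (joint q \<beta> N n) \<in> borel_measurable (lborel \<Otimes>\<^sub>M lborel)"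
proof (cases "n = 1")
  case True
  show ?thesis
    unfolding joint_eq_1[OF True, abs_def] by measurable
next
  case False
  show ?thesis
    unfolding joint_eq[OF False, abs_def] mu_til_def by measurable
qed

lemma joint_nonneg: "0 \<le> joint q \<beta> N n y x"
proof (cases "n = 1")
  case True
  show ?thesis
    unfolding joint_eq_1[OF True] by (simp add: q_nonneg fwd_dens_nonneg)
next
  case False
  show ?thesis
    unfolding joint_eq[OF False]
    by (intro integral_nonneg_AE AE_I2) (simp add: q_nonneg fwd_dens_nonneg gauss_dens_nonneg)
qed

lemma nn_integral_joint_mult:
  assumes "n \<noteq> 1" and [measurable]: "\<phi> \<in> borel_measurable lborel" and \<phi>_nonneg: "\<And>y. 0 \<le> \<phi> y"
  shows "(\<integral>\<^sup>+y. ennreal (joint q \<beta> N n y x * \<phi> y) \<partial>lborel)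
    = (\<integral>\<^sup>+x0. ennreal (q x0 * fwd_dens x0 x) * (\<integral>\<^sup>+y. ennreal (posterior x x0 y * \<phi> y) \<partial>lborel) \<partial>lborel)"
proof -
  have "0 < btil \<beta> n"
    using assms n_range by (intro btil_pos) auto
  have "ennreal (joint q \<beta> N n y x) = (\<integral>\<^sup>+x0. ennreal (q x0 * fwd_dens x0 x * posterior x x0 y) \<partial>lborel)" for y
    unfolding joint_eq[OF \<open>n \<noteq> 1\<close>] using ennreal_marg[of x, symmetric]
    by (intro ennreal_integral_mult_bounded[OF _ gauss_dens_nonneg gauss_dens_le[OF \<open>0 < btil \<beta> n\<close>]])
       (auto simp: q_nonneg fwd_dens_nonneg mu_til_def)
  then have "(\<integral>\<^sup>+y. ennreal (joint q \<beta> N n y x * \<phi> y) \<partial>lborel)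
      = (\<integral>\<^sup>+y. \<integral>\<^sup>+x0. ennreal (q x0 * fwd_dens x0 x) * ennreal (posterior x x0 y * \<phi> y) \<partial>lborel \<partial>lborel)"
    by (simp add: ennreal_mult'' \<phi>_nonneg nn_integral_multc[symmetric] mu_til_def)
       (simp add: ennreal_mult q_nonneg fwd_dens_nonneg gauss_dens_nonneg \<phi>_nonneg mult.assoc)
  also have "\<dots> = (\<integral>\<^sup>+x0. \<integral>\<^sup>+y. ennreal (q x0 * fwd_dens x0 x) * ennreal (posterior x x0 y * \<phi> y) \<partial>lborel \<partial>lborel)"
    by (rule lborel_pair.Fubini') (unfold mu_til_def, measurable)
  also have "\<dots> = (\<integral>\<^sup>+x0. ennreal (q x0 * fwd_dens x0 x) * (\<integral>\<^sup>+y. ennreal (posterior x x0 y * \<phi> y) \<partial>lborel) \<partial>lborel)"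
    by (simp add: nn_integral_cmult mu_til_def)
  finally show ?thesis .
qed

lemma posterior_nn_integral:
  assumes "n \<noteq> 1"
  shows "(\<integral>\<^sup>+y. ennreal (posterior x x0 y * (y $ i - t)\<^sup>2) \<partial>lborel)
    = ennreal (btil \<beta> n + (mu_coeff_xn \<beta> n * x $ i + mu_coeff_x0 \<beta> n * x0 $ i - t)\<^sup>2)"
    and "(\<integral>\<^sup>+y. ennreal (posterior x x0 y) \<partial>lborel) = 1"
proof -
  have "has_gauss_moments (posterior x x0) (mu_til \<beta> n x x0) (btil \<beta> n)"
    using assms n_range by (intro has_gauss_moments_gauss_dens btil_pos) auto
  then show "(\<integral>\<^sup>+y. ennreal (posterior x x0 y * (y $ i - t)\<^sup>2) \<partial>lborel)
      = ennreal (btil \<beta> n + (mu_coeff_xn \<beta> n * x $ i + mu_coeff_x0 \<beta> n * x0 $ i - t)\<^sup>2)"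
    and "(\<integral>\<^sup>+y. ennreal (posterior x x0 y) \<partial>lborel) = 1"
    by (simp_all add: has_gauss_moments_sq_dev has_gauss_moments_nn_integral_1 mu_til_eq[OF n_range])
qed

lemma nn_integral_joint: "(\<integral>\<^sup>+y. ennreal (joint q \<beta> N n y x) \<partial>lborel) = ennreal (marg q \<beta> N n x)"
proof (cases "n = 1")
  case True
  show ?thesis
    unfolding joint_eq_1[OF True] ennreal_marg ..
next
  case False
  then show ?thesis
    using nn_integral_joint_mult[OF False, of "\<lambda>_. 1" x]
    by (simp add: posterior_nn_integral(2) ennreal_marg)
qed

lemma nn_integral_joint_sq_dev_ge:
  "ennreal (btil \<beta> n * marg q \<beta> N n x) \<le> (\<integral>\<^sup>+y. ennreal (joint q \<beta> N n y x * (y $ i - t)\<^sup>2) \<partial>lborel)"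
proof (cases "n = 1")
  case True
  show ?thesis
    unfolding True by (simp add: btil_def)
next
  case False
  have "ennreal (btil \<beta> n * marg q \<beta> N n x)
      = (\<integral>\<^sup>+x0. ennreal (q x0 * fwd_dens x0 x) * ennreal (btil \<beta> n) \<partial>lborel)"
    using btil_nonneg[OF n_range] by (simp add: ennreal_mult' ennreal_marg nn_integral_cmult mult.commute)
  also have "\<dots> \<le> (\<integral>\<^sup>+x0. ennreal (q x0 * fwd_dens x0 x)
      * (\<integral>\<^sup>+y. ennreal (posterior x x0 y * (y $ i - t)\<^sup>2) \<partial>lborel) \<partial>lborel)"
    unfolding posterior_nn_integral(1)[OF False]
    by (intro nn_integral_mono mult_left_mono ennreal_leI) auto
  also have "\<dots> = (\<integral>\<^sup>+y. ennreal (joint q \<beta> N n y x * (y $ i - t)\<^sup>2) \<partial>lborel)"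
    by (rule nn_integral_joint_mult[OF False, symmetric]) auto
  finally show ?thesis .
qed

lemma nn_integral_joint_affine_err_given_x0:
  "(\<integral>\<^sup>+x. \<integral>\<^sup>+y. ennreal (joint q \<beta> N n y x * (y $ i - (u * x $ i + v))\<^sup>2) \<partial>lborel \<partial>lborel)
    = (\<integral>\<^sup>+x0. ennreal (q x0) * (\<integral>\<^sup>+x. ennreal (fwd_dens x0 x
        * (btil \<beta> n + ((mu_coeff_xn \<beta> n - u) * x $ i + (mu_coeff_x0 \<beta> n * x0 $ i - v))\<^sup>2)) \<partial>lborel) \<partial>lborel)"
proof (cases "n = 1")
  case True
  have coeffs: "btil \<beta> n = 0" "mu_coeff_xn \<beta> n = 0" "mu_coeff_x0 \<beta> n = 1"
    unfolding True using beta_bounds[of 1] bbar_rec[of 1] n_range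
    by (simp_all add: btil_def mu_coeff_xn_def mu_coeff_x0_def)
  have "(\<integral>\<^sup>+x. \<integral>\<^sup>+y. ennreal (joint q \<beta> N n y x * (y $ i - (u * x $ i + v))\<^sup>2) \<partial>lborel \<partial>lborel)
      = (\<integral>\<^sup>+y. \<integral>\<^sup>+x. ennreal (q y) * ennreal (fwd_dens y x * (y $ i - (u * x $ i + v))\<^sup>2) \<partial>lborel \<partial>lborel)"
    unfolding joint_eq_1[OF True]
    by (subst lborel_pair.Fubini') (simp_all add: ennreal_mult q_nonneg fwd_dens_nonneg mult.assoc)
  then show ?thesis
    by (simp add: coeffs nn_integral_cmult algebra_simps)
next
  case False
  have "(\<integral>\<^sup>+x. \<integral>\<^sup>+y. ennreal (joint q \<beta> N n y x * (y $ i - (u * x $ i + v))\<^sup>2) \<partial>lborel \<partial>lborel)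
      = (\<integral>\<^sup>+x. \<integral>\<^sup>+x0. ennreal (q x0) * ennreal (fwd_dens x0 x
          * (btil \<beta> n + ((mu_coeff_xn \<beta> n - u) * x $ i + (mu_coeff_x0 \<beta> n * x0 $ i - v))\<^sup>2)) \<partial>lborel \<partial>lborel)"
    using btil_nonneg[OF n_range]
    by (simp add: nn_integral_joint_mult[OF False] posterior_nn_integral(1)[OF False] ennreal_mult
        q_nonneg fwd_dens_nonneg mult.assoc algebra_simps)
  also have "\<dots> = (\<integral>\<^sup>+x0. ennreal (q x0) * (\<integral>\<^sup>+x. ennreal (fwd_dens x0 x
        * (btil \<beta> n + ((mu_coeff_xn \<beta> n - u) * x $ i + (mu_coeff_x0 \<beta> n * x0 $ i - v))\<^sup>2)) \<partial>lborel) \<partial>lborel)"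
    by (subst lborel_pair.Fubini') (simp_all add: nn_integral_cmult)
  finally show ?thesis .
qed

lemma nn_integral_joint_affine_err:
  "(\<integral>\<^sup>+x. \<integral>\<^sup>+y. ennreal (joint q \<beta> N n y x * (y $ i - (u * x $ i + v))\<^sup>2) \<partial>lborel \<partial>lborel)
    = (\<integral>\<^sup>+x0. ennreal (q x0) * ennreal (btil \<beta> n + (mu_coeff_xn \<beta> n - u)\<^sup>2 * bbar \<beta> n
        + ((sqrt (abar \<beta> (n - 1)) - u * sqrt (abar \<beta> n)) * x0 $ i - v)\<^sup>2) \<partial>lborel)"
proof -
  have "(\<integral>\<^sup>+x. ennreal (fwd_dens x0 x
        * (btil \<beta> n + ((mu_coeff_xn \<beta> n - u) * x $ i + (mu_coeff_x0 \<beta> n * x0 $ i - v))\<^sup>2)) \<partial>lborel)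
      = ennreal (btil \<beta> n + (mu_coeff_xn \<beta> n - u)\<^sup>2 * bbar \<beta> n
        + ((sqrt (abar \<beta> (n - 1)) - u * sqrt (abar \<beta> n)) * x0 $ i - v)\<^sup>2)" for x0
  proof -
    have mean: "(mu_coeff_xn \<beta> n - u) * (sqrt (abar \<beta> n) * x0 $ i) + (mu_coeff_x0 \<beta> n * x0 $ i - v)
        = (sqrt (abar \<beta> (n - 1)) - u * sqrt (abar \<beta> n)) * x0 $ i - v"
      unfolding mu_coeff_mean[OF n_range, symmetric] by (simp add: algebra_simps)
    have "(\<integral>\<^sup>+x. ennreal (fwd_dens x0 x * (btil \<beta> n + (A * x $ i + B)\<^sup>2)) \<partial>lborel)
        = ennreal (btil \<beta> n + A\<^sup>2 * bbar \<beta> n + (A * (sqrt (abar \<beta> n) * x0 $ i) + B)\<^sup>2)" for A B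
      using fwd_dens_gauss_moments[of x0, unfolded has_gauss_moments_def] btil_nonneg[OF n_range] bbar_nonneg[of n] n_range
      by (subst nn_integral_const_plus) (auto simp: fwd_dens_nonneg fwd_dens_nn_integral ennreal_plus add.assoc)
    from this[of "mu_coeff_xn \<beta> n - u" "mu_coeff_x0 \<beta> n * x0 $ i - v"] show ?thesis
      unfolding mean .
  qed
  then show ?thesis
    by (simp add: nn_integral_joint_affine_err_given_x0)
qed

section \<open>Bounds on the optimal reverse variance\<close>

lemma sigma_opt_eq:
  "sigma_opt q \<beta> N n
    = (\<integral>x. marg q \<beta> N n x * cov_trace (\<lambda>y. joint q \<beta> N n y x / marg q \<beta> N n x) \<partial>lborel) / real CARD('d)"
  by (simp add: sigma_opt_def rev_cov_tr_def rev_mean_def rev_cond_def cov_trace_def)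

lemma nn_integral_joint_affine_err_le:
  assumes "0 \<le> U"
    and "AE x0 in lborel. q x0 \<noteq> 0 \<longrightarrow> (\<forall>i. btil \<beta> n + (mu_coeff_xn \<beta> n - u)\<^sup>2 * bbar \<beta> n
      + ((sqrt (abar \<beta> (n - 1)) - u * sqrt (abar \<beta> n)) * x0 $ i - v)\<^sup>2 \<le> U)"
  shows "(\<integral>\<^sup>+x. (\<Sum>i\<in>UNIV. \<integral>\<^sup>+y. ennreal (joint q \<beta> N n y x * (y $ i - (u * x $ i + v))\<^sup>2) \<partial>lborel) \<partial>lborel)
    \<le> ennreal (real CARD('d) * U)"
proof -
  have coord: "(\<integral>\<^sup>+x. \<integral>\<^sup>+y. ennreal (joint q \<beta> N n y x * (y $ i - (u * x $ i + v))\<^sup>2) \<partial>lborel \<partial>lborel)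
      \<le> ennreal U" for i
  proof -
    have "(\<integral>\<^sup>+x. \<integral>\<^sup>+y. ennreal (joint q \<beta> N n y x * (y $ i - (u * x $ i + v))\<^sup>2) \<partial>lborel \<partial>lborel)
        \<le> (\<integral>\<^sup>+x0. ennreal (q x0) * ennreal U \<partial>lborel)"
      unfolding nn_integral_joint_affine_err
    proof (rule nn_integral_mono_AE)
      show "AE x0 in lborel. ennreal (q x0) * ennreal (btil \<beta> n + (mu_coeff_xn \<beta> n - u)\<^sup>2 * bbar \<beta> n
          + ((sqrt (abar \<beta> (n - 1)) - u * sqrt (abar \<beta> n)) * x0 $ i - v)\<^sup>2) \<le> ennreal (q x0) * ennreal U"
        using assms(2)
      proof eventually_elim
        case (elim x0)
        then show ?case
          by (cases "q x0 = 0") (auto intro!: mult_left_mono ennreal_leI)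
      qed
    qed
    then show ?thesis
      by (simp add: nn_integral_multc q_nn_integral)
  qed
  have "(\<integral>\<^sup>+x. (\<Sum>i\<in>UNIV. \<integral>\<^sup>+y. ennreal (joint q \<beta> N n y x * (y $ i - (u * x $ i + v))\<^sup>2) \<partial>lborel) \<partial>lborel)
      = (\<Sum>i\<in>UNIV. \<integral>\<^sup>+x. \<integral>\<^sup>+y. ennreal (joint q \<beta> N n y x * (y $ i - (u * x $ i + v))\<^sup>2) \<partial>lborel \<partial>lborel)"
    by (rule nn_integral_sum) auto
  also have "\<dots> \<le> (\<Sum>i\<in>(UNIV :: 'd set). ennreal U)"
    by (rule sum_mono) (rule coord)
  also have "\<dots> = ennreal (real CARD('d) * U)"
    using \<open>0 \<le> U\<close> by (simp add: ennreal_mult ennreal_of_nat_eq_real_of_nat)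
  finally show ?thesis .
qed

lemma sigma_opt_le:
  assumes "0 \<le> U"
    and "AE x0 in lborel. q x0 \<noteq> 0 \<longrightarrow> (\<forall>i. btil \<beta> n + (mu_coeff_xn \<beta> n - u)\<^sup>2 * bbar \<beta> n
      + ((sqrt (abar \<beta> (n - 1)) - u * sqrt (abar \<beta> n)) * x0 $ i - v)\<^sup>2 \<le> U)"
  shows "sigma_opt q \<beta> N n \<le> U"
proof -
  have "(\<integral>x. marg q \<beta> N n x * cov_trace (\<lambda>y. joint q \<beta> N n y x / marg q \<beta> N n x) \<partial>lborel)
      \<le> real CARD('d) * U"
    by (rule integral_cov_trace_le[OF joint_measurable marg_measurable _ joint_nonneg marg_nonneg
          nn_integral_joint nn_integral_joint_affine_err_le[OF assms] \<open>0 \<le> U\<close>]) measurable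
  then show ?thesis
    by (simp add: sigma_opt_eq divide_le_eq mult.commute)
qed

lemma nn_integral_joint_err_inv_sqrt_alpha:
  "(\<integral>\<^sup>+x. (\<Sum>i\<in>UNIV. \<integral>\<^sup>+y. ennreal (joint q \<beta> N n y x
      * (y $ i - (1 / sqrt (alpha \<beta> n) * x $ i + 0))\<^sup>2) \<partial>lborel) \<partial>lborel)
    \<le> ennreal (real CARD('d) * (\<beta> n / alpha \<beta> n))"
proof (rule nn_integral_joint_affine_err_le)
  show "0 \<le> \<beta> n / alpha \<beta> n"
    using alpha_bounds[OF n_range] beta_bounds[OF n_range] by simp
  have "sqrt (abar \<beta> (n - 1)) - 1 / sqrt (alpha \<beta> n) * sqrt (abar \<beta> n) = 0"
    using abar_rec[of n] alpha_bounds[OF n_range] n_range by (simp add: real_sqrt_mult)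
  then show "AE x0 in lborel. q x0 \<noteq> 0 \<longrightarrow> (\<forall>i. btil \<beta> n
      + (mu_coeff_xn \<beta> n - 1 / sqrt (alpha \<beta> n))\<^sup>2 * bbar \<beta> n
      + ((sqrt (abar \<beta> (n - 1)) - 1 / sqrt (alpha \<beta> n) * sqrt (abar \<beta> n)) * x0 $ i - 0)\<^sup>2
      \<le> \<beta> n / alpha \<beta> n)"
    unfolding btil_plus_sq_mu_coeff_xn_minus_inv_sqrt_alpha[OF n_range, symmetric] by simp
qed

lemma sigma_opt_le_beta_div_alpha: "sigma_opt q \<beta> N n \<le> \<beta> n / alpha \<beta> n"
proof -
  have "(\<integral>x. marg q \<beta> N n x * cov_trace (\<lambda>y. joint q \<beta> N n y x / marg q \<beta> N n x) \<partial>lborel)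
      \<le> real CARD('d) * (\<beta> n / alpha \<beta> n)"
    using alpha_bounds[OF n_range] beta_bounds[OF n_range]
    by (intro integral_cov_trace_le[OF joint_measurable marg_measurable _ joint_nonneg marg_nonneg
          nn_integral_joint nn_integral_joint_err_inv_sqrt_alpha]) auto
  then show ?thesis
    by (simp add: sigma_opt_eq divide_le_eq mult.commute)
qed

lemma sigma_opt_ge_btil: "btil \<beta> n \<le> sigma_opt q \<beta> N n"
proof -
  \<comment> \<open>The error bound for \<open>u = 1 / sqrt (alpha \<beta> n)\<close> only serves to make the conditional
    variances integrable.\<close>
  have "real CARD('d) * btil \<beta> n
      \<le> (\<integral>x. marg q \<beta> N n x * cov_trace (\<lambda>y. joint q \<beta> N n y x / marg q \<beta> N n x) \<partial>lborel)"
    using alpha_bounds[OF n_range] beta_bounds[OF n_range]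
    by (intro integral_cov_trace_ge[OF joint_measurable marg_measurable _ joint_nonneg marg_nonneg
          nn_integral_joint nn_integral_joint_err_inv_sqrt_alpha _ marg_nn_integral nn_integral_joint_sq_dev_ge])
       auto
  then show ?thesis
    by (simp add: sigma_opt_eq le_divide_eq mult.commute)
qed

lemma sigma_opt_le_support:
  assumes "AE x in lborel. q x \<noteq> 0 \<longrightarrow> (\<forall>i. a \<le> x $ i \<and> x $ i \<le> b)"
  shows "sigma_opt q \<beta> N n \<le> btil \<beta> n + abar \<beta> (n - 1) * (\<beta> n)\<^sup>2 / (bbar \<beta> n)\<^sup>2 * ((b - a) / 2)\<^sup>2"
proof (rule sigma_opt_le[where u="mu_coeff_xn \<beta> n" and v="mu_coeff_x0 \<beta> n * ((a + b) / 2)"])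
  have "n - 1 \<le> N"
    using n_range by auto
  then have "0 \<le> abar \<beta> (n - 1)"
    using abar_bounds by (simp add: less_imp_le)
  then have coeff: "(mu_coeff_x0 \<beta> n)\<^sup>2 = abar \<beta> (n - 1) * (\<beta> n)\<^sup>2 / (bbar \<beta> n)\<^sup>2"
    by (simp add: mu_coeff_x0_def power_divide power_mult_distrib)
  show "0 \<le> btil \<beta> n + abar \<beta> (n - 1) * (\<beta> n)\<^sup>2 / (bbar \<beta> n)\<^sup>2 * ((b - a) / 2)\<^sup>2"
    using btil_nonneg[OF n_range] \<open>0 \<le> abar \<beta> (n - 1)\<close> by simp
  have x0_coeff: "sqrt (abar \<beta> (n - 1)) - mu_coeff_xn \<beta> n * sqrt (abar \<beta> n) = mu_coeff_x0 \<beta> n"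
    using mu_coeff_mean[OF n_range] by simp
  show "AE x0 in lborel. q x0 \<noteq> 0 \<longrightarrow> (\<forall>i. btil \<beta> n + (mu_coeff_xn \<beta> n - mu_coeff_xn \<beta> n)\<^sup>2 * bbar \<beta> n
      + ((sqrt (abar \<beta> (n - 1)) - mu_coeff_xn \<beta> n * sqrt (abar \<beta> n)) * x0 $ i - mu_coeff_x0 \<beta> n * ((a + b) / 2))\<^sup>2
      \<le> btil \<beta> n + abar \<beta> (n - 1) * (\<beta> n)\<^sup>2 / (bbar \<beta> n)\<^sup>2 * ((b - a) / 2)\<^sup>2)"
    using assms
  proof eventually_elim
    case (elim x0)
    show ?case
    proof (intro impI allI)
      fix i
      assume "q x0 \<noteq> 0"
      then have bound: "(x0 $ i - (a + b) / 2)\<^sup>2 \<le> ((b - a) / 2)\<^sup>2"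
        using elim by (intro sq_dist_midpoint_le) auto
      have "(mu_coeff_x0 \<beta> n * x0 $ i - mu_coeff_x0 \<beta> n * ((a + b) / 2))\<^sup>2
          = (mu_coeff_x0 \<beta> n)\<^sup>2 * (x0 $ i - (a + b) / 2)\<^sup>2"
        by (simp add: power_mult_distrib[symmetric] right_diff_distrib)
      also have "\<dots> \<le> (mu_coeff_x0 \<beta> n)\<^sup>2 * ((b - a) / 2)\<^sup>2"
        using bound by (intro mult_left_mono) simp_all
      finally show "btil \<beta> n + (mu_coeff_xn \<beta> n - mu_coeff_xn \<beta> n)\<^sup>2 * bbar \<beta> n
          + ((sqrt (abar \<beta> (n - 1)) - mu_coeff_xn \<beta> n * sqrt (abar \<beta> n)) * x0 $ i
            - mu_coeff_x0 \<beta> n * ((a + b) / 2))\<^sup>2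
          \<le> btil \<beta> n + abar \<beta> (n - 1) * (\<beta> n)\<^sup>2 / (bbar \<beta> n)\<^sup>2 * ((b - a) / 2)\<^sup>2"
        unfolding x0_coeff coeff by simp
    qed
  qed
qed

end

theorem corollary3:
  fixes q :: "real^'d \<Rightarrow> real" and \<beta> :: "nat \<Rightarrow> real" and N n :: nat and a b :: real
  assumes "N \<ge> 1"
    and "\<And>k. k \<in> {1..N} \<Longrightarrow> 0 < \<beta> k \<and> \<beta> k < 1"
    and "q \<in> borel_measurable lborel"
    and "\<And>x. 0 \<le> q x"
    and "integrable lborel q" and "(\<integral>x. q x \<partial>lborel) = 1"
    and "integrable lborel (\<lambda>x. q x * (norm x)\<^sup>2)"
    and "n \<in> {1..N}"
  shows "btil \<beta> n \<le> sigma_opt q \<beta> N n \<and> sigma_opt q \<beta> N n \<le> \<beta> n / alpha \<beta> n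
    \<and> ((AE x in lborel. q x \<noteq> 0 \<longrightarrow> (\<forall>i. a \<le> x $ i \<and> x $ i \<le> b)) \<longrightarrow>
        sigma_opt q \<beta> N n
          \<le> btil \<beta> n + abar \<beta> (n - 1) * (\<beta> n)\<^sup>2 / (bbar \<beta> n)\<^sup>2 * ((b - a) / 2)\<^sup>2)"
proof -
  interpret reverse_step \<beta> N q n
  proof
    show "(\<integral>\<^sup>+x. ennreal (q x) \<partial>lborel) = 1"
      using nn_integral_eq_integral[OF assms(5)] assms(4,6) by simp
  qed (use assms in auto)
  show ?thesis
    using sigma_opt_ge_btil sigma_opt_le_beta_div_alpha sigma_opt_le_support by blast
qed

end
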